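(* Let $m\ge0$ be an integer, $w_0\in L_{2m}$ the basis vector of weight $0$, $\mu$ generic, and $\Phi^{w_0,\mathrm{trig}}_\mu$ as in the context. If $|q^{-2\lambda}|$ is sufficiently small, the trace $\mathrm{Tr}|_{M_\mu}(\Phi^{w_0,\mathrm{trig}}_\mu q^{2\lambda\rho})$ converges and \[ \mathrm{Tr}|_{M_\mu}(\Phi^{w_0,\mathrm{trig}}_\mu q^{2\lambda\rho})=q^{\lambda\mu}\sum_{l=0}^m(-1)^lq^{-2\lambda l}q^{-l(l-1)/2}\frac{[m]_l[m+l]_l}{[l]_l}\frac{(q-q^{-1})^l}{\prod_{i=0}^{l-1}(1-q^{-2\mu+2i})\prod_{i=0}^l(1-q^{-2\lambda-2i})}. \]
   Context: $q\in\mathbb{C}^\times$ transcendental over $\mathbb{Q}$, $q^x:=e^{x\log q}$, $[n]=\frac{q^n-q^{-n}}{q-q^{-1}}$, $[n]_l=[n][n-1]\cdots[n-l+1]$. $U_q(\mathfrak{sl}_2)$ is generated by $e,f,q^h$ with $q^heq^{-h}=q^2e$, $q^hfq^{-h}=q^{-2}f$, $[e,f]=\frac{q^h-q^{-h}}{q-q^{-1}}$, coproduct $\Delta(e)=e\otimes1+q^h\otimes e$, $\Delta(f)=f\otimes q^{-h}+1\otimes f$, $\Delta(q^h)=q^h\otimes q^h$. $M_\mu$ is the Verma module with basis $f^jv_\mu$ ($j\ge0$): $ef^jv_\mu=[\mu-j+1][j]f^{j-1}v_\mu$, $f\cdot f^jv_\mu=f^{j+1}v_\mu$, $q^hf^jv_\mu=q^{\mu-2j}f^jv_\mu$.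 $L_{2m}$ is the irreducible module with basis $w_{2j}$, $-m\le j\le m$: $ew_{2j}=[m-j]w_{2j+2}$, $fw_{2j}=[m+j]w_{2j-2}$, $q^hw_{2j}=q^{2j}w_{2j}$. $\Phi^{w_0,\mathrm{trig}}_\mu:M_\mu\to M_\mu\widehat\otimes L_{2m}$ is the unique intertwiner with $v_\mu\mapsto v_\mu\otimes w_0+$ terms of lower weight in the first factor. $q^{2\lambda\rho}$ acts on $f^jv_\mu$ by $q^{\lambda(\mu-2j)}$; the trace is valued in $L_{2m}[0]=\mathbb{C}w_0\cong\mathbb{C}$. *)

theory Defs
  imports "HOL-Analysis.Analysis" "HOL-Computational_Algebra.Polynomial"
begin

text \<open>Conventions. A logarithm L of q is fixed, q = exp L, and
  q^x := exp (x * L) for complex x.\<close>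

definition qpow :: "complex \<Rightarrow> complex \<Rightarrow> complex" where
  "qpow L x = exp (x * L)"

definition qint :: "complex \<Rightarrow> complex \<Rightarrow> complex" where
  "qint L x = (qpow L x - qpow L (- x)) / (qpow L 1 - qpow L (- 1))"

definition qfall :: "complex \<Rightarrow> complex \<Rightarrow> nat \<Rightarrow> complex" where
  "qfall L n l = (\<Prod>i<l. qint L (n - of_nat i))"

text \<open>Elements of the completed tensor product M_mu (completed) L_{2m} are represented by
  coefficient functions T k i = coefficient of (f^k v_mu) tensor w_{2i}
  (only -m \<le> i \<le> m is meaningful; infinite sums in k are allowed).
  Below: the actions of Delta(e), Delta(f), Delta(q^h) on such elements.\<close>

definition actE :: "complex \<Rightarrow> complex \<Rightarrow> nat \<Rightarrow> (nat \<Rightarrow> int \<Rightarrow> complex) \<Rightarrow> (nat \<Rightarrow> int \<Rightarrow> complex)" where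
  "actE L \<mu> m T = (\<lambda>k i.
     if - int m \<le> i \<and> i \<le> int m then
       T (Suc k) i * qint L (\<mu> - of_nat k) * qint L (of_nat (Suc k))
       + (if - int m \<le> i - 1 then T k (i - 1) * qpow L (\<mu> - 2 * of_nat k) * qint L (of_int (int m - i + 1)) else 0)
     else 0)"

definition actF :: "complex \<Rightarrow> nat \<Rightarrow> (nat \<Rightarrow> int \<Rightarrow> complex) \<Rightarrow> (nat \<Rightarrow> int \<Rightarrow> complex)" where
  "actF L m T = (\<lambda>k i.
     if - int m \<le> i \<and> i \<le> int m then
       (if k \<ge> 1 then T (k - 1) i * qpow L (- 2 * of_int i) else 0)
       + (if i + 1 \<le> int m then T k (i + 1) * qint L (of_int (int m + i + 1)) else 0)
     else 0)"

definition actK :: "complex \<Rightarrow> complex \<Rightarrow> (nat \<Rightarrow> int \<Rightarrow> complex) \<Rightarrow> (nat \<Rightarrow> int \<Rightarrow> complex)" where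
  "actK L \<mu> T = (\<lambda>k i. qpow L (\<mu> - 2 * of_nat k + 2 * of_int i) * T k i)"

text \<open>A linear map Phi : M_mu \<rightarrow> M_mu (completed) L_{2m}, given by Phi j = image of f^j v_mu,
  is an intertwiner normalized by v_mu \<mapsto> v_mu \<otimes> w_0 + (lower weight in first factor).\<close>
definition is_trig_intertwiner ::
  "complex \<Rightarrow> complex \<Rightarrow> nat \<Rightarrow> (nat \<Rightarrow> nat \<Rightarrow> int \<Rightarrow> complex) \<Rightarrow> bool" where
  "is_trig_intertwiner L \<mu> m \<Phi> \<longleftrightarrow>
     (\<forall>j k i. (i < - int m \<or> int m < i) \<longrightarrow> \<Phi> j k i = 0) \<and>
     (\<forall>j. \<Phi> (Suc j) = actF L m (\<Phi> j)) \<and>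
     (\<forall>j. actE L \<mu> m (\<Phi> j) =
            (\<lambda>k i. qint L (\<mu> - of_nat j + 1) * qint L (of_nat j) * \<Phi> (j - 1) k i)) \<and>
     (\<forall>j. actK L \<mu> (\<Phi> j) = (\<lambda>k i. qpow L (\<mu> - 2 * of_nat j) * \<Phi> j k i)) \<and>
     \<Phi> 0 0 0 = 1 \<and> (\<forall>i. i \<noteq> 0 \<longrightarrow> \<Phi> 0 0 i = 0)"

definition trig_intertwiner :: "complex \<Rightarrow> complex \<Rightarrow> nat \<Rightarrow> (nat \<Rightarrow> nat \<Rightarrow> int \<Rightarrow> complex)" where
  "trig_intertwiner L \<mu> m = (THE \<Phi>. is_trig_intertwiner L \<mu> m \<Phi>)"

text \<open>j-th term of the trace: coefficient of f^j v_mu \<otimes> w_0 in Phi(f^j v_mu),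
  times the eigenvalue q^{lambda(mu-2j)} of q^{2 lambda rho}.\<close>
definition trace_term :: "complex \<Rightarrow> complex \<Rightarrow> nat \<Rightarrow> complex \<Rightarrow> nat \<Rightarrow> complex" where
  "trace_term L \<mu> m lam j = trig_intertwiner L \<mu> m j j 0 * qpow L (lam * (\<mu> - 2 * of_nat j))"

definition trace_formula :: "complex \<Rightarrow> complex \<Rightarrow> nat \<Rightarrow> complex \<Rightarrow> complex" where
  "trace_formula L \<mu> m lam = qpow L (lam * \<mu>) *
     (\<Sum>l\<le>m. (- 1) ^ l * qpow L (- 2 * lam * of_nat l)
        * qpow L (- (of_nat l * (of_nat l - 1) / 2))
        * (qfall L (of_nat m) l * qfall L (of_nat m + of_nat l) l / qfall L (of_nat l) l)
        * (qpow L 1 - qpow L (- 1)) ^ l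
        / ((\<Prod>i<l. (1 - qpow L (- 2 * \<mu> + 2 * of_nat i)))
           * (\<Prod>i\<le>l. (1 - qpow L (- 2 * lam - 2 * of_nat i)))))"

end

theory Submission
  imports Defs
begin

text \<open>The intertwiner is \<Phi>(f^j v) = \<Delta>(f)^j \<Phi>(v), where \<Phi>(v) = \<Sum>_k a_k f^k v \<otimes> w_2k is the
  vector of weight \<mu> killed by \<Delta>(e) with a_0 = 1. Killing by \<Delta>(e) is a first order recursion
  for the a_k, uniquely solvable since [\<mu> - k] \<noteq> 0 for k < m once \<mu> avoids a countable set;
  transcendence of q excludes every other degeneracy. As \<Delta>(f) either raises the power of f
  (scaling by q^-2i) or lowers w_2i, the coefficient c_j(i) of f^(j+i) v \<otimes> w_2i in \<Phi>(f^j v)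
  satisfies c_(j+1)(i) = q^-2i c_j(i) + [m+i+1] c_j(i+1) and c_0(i) = a_i. Hence the series
  G_i(x) = \<Sum>_j c_j(i) x^j converge for small x and satisfy
  G_i(x) (1 - x q^-2i) = a_i + x [m+i+1] G_(i+1)(x) with G_(m+1) = 0. Solving downwards from
  i = m gives G_0, and the trace is q^(\<lambda>\<mu>) G_0(q^-2\<lambda>).\<close>

section \<open>Powers of q and q-numbers\<close>

lemma qpow_add: "qpow L (x + y) = qpow L x * qpow L y"
  by (simp add: qpow_def distrib_right exp_add)

lemma qpow_diff: "qpow L (x - y) = qpow L x / qpow L y"
  by (simp add: qpow_def left_diff_distrib exp_diff)

lemma qpow_minus: "qpow L (- x) = inverse (qpow L x)"
  by (simp add: qpow_def exp_minus)

lemma qpow_nonzero [simp]: "qpow L x \<noteq> 0"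
  by (simp add: qpow_def)

lemma qpow_zero [simp]: "qpow L 0 = 1"
  by (simp add: qpow_def)

lemma qpow_of_nat_mult: "qpow L (of_nat n * x) = qpow L x ^ n"
  by (simp only: qpow_def mult.assoc exp_of_nat_mult)

lemma qpow_split: "x = y + z \<Longrightarrow> qpow L x = qpow L y * qpow L z"
  by (simp add: qpow_add)

lemma qint_zero [simp]: "qint L 0 = 0"
  unfolding qint_def by simp

lemma qint_cross_difference:
  "qint L a * qint L (b + 1) - qint L (a + 1) * qint L b = qint L (a - b)"
proof -
  have "(qpow L a - qpow L (- a)) * (qpow L (b + 1) - qpow L (- (b + 1))) -
    (qpow L (a + 1) - qpow L (- (a + 1))) * (qpow L b - qpow L (- b)) =
    (qpow L 1 - qpow L (- 1)) * (qpow L (a - b) - qpow L (- (a - b)))"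
    by (simp only: qpow_add qpow_diff qpow_minus) (simp add: field_simps)
  moreover have "(x / c) * (y / c) - (z / c) * (w / c) = v / c" if "x * y - z * w = c * v"
    for x y z w v c :: complex
    using that by (cases "c = 0") (simp_all add: field_simps)
  ultimately show ?thesis unfolding qint_def by blast
qed

lemma qint_add: "qpow L (- b) * qint L a + qpow L a * qint L b = qint L (a + b)"
proof -
  have "qpow L (- b) * (qpow L a - qpow L (- a)) + qpow L a * (qpow L b - qpow L (- b))
      = qpow L (a + b) - qpow L (- (a + b))"
    by (simp only: qpow_add qpow_diff qpow_minus) (simp add: field_simps)
  then show ?thesis unfolding qint_def by (simp add: add_divide_distrib[symmetric])
qed

lemma qint_eq_0_iff:
  assumes "qpow L 1 - qpow L (-1) \<noteq> 0"
  shows "qint L x = 0 \<longleftrightarrow> qpow L (2 * x) = 1"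
proof -
  have "qint L x = 0 \<longleftrightarrow> qpow L x = inverse (qpow L x)"
    using assms unfolding qint_def qpow_minus[of L x] by simp
  also have "\<dots> \<longleftrightarrow> qpow L x * qpow L x = 1"
    by (metis qpow_nonzero inverse_unique right_inverse)
  moreover have "qpow L (2 * x) = qpow L x * qpow L x" by (rule qpow_split) simp
  ultimately show ?thesis by simp
qed

lemma qfall_Suc: "qfall L n (Suc l) = qfall L n l * qint L (n - of_nat l)"
  by (simp add: qfall_def)

lemma qfall_Suc_shift: "qfall L (n + 1) (Suc l) = qint L (n + 1) * qfall L n l"
proof -
  have "qfall L (n + 1) (Suc l)
      = qint L (n + 1 - of_nat 0) * (\<Prod>i<l. qint L (n + 1 - of_nat (Suc i)))"
    unfolding qfall_def by (rule prod.lessThan_Suc_shift)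
  also have "(\<Prod>i<l. qint L (n + 1 - of_nat (Suc i))) = qfall L n l"
    unfolding qfall_def by (rule prod.cong) simp_all
  finally show ?thesis by simp
qed

lemma prod_qint_eq_qfall:
  "(\<Prod>t\<in>{0<..l}. qint L (of_nat m + of_nat t)) = qfall L (of_nat m + of_nat l) l"
proof (induction l)
  case (Suc l)
  have "{0<..Suc l} = insert (Suc l) {0<..l}" by auto
  then have "(\<Prod>t\<in>{0<..Suc l}. qint L (of_nat m + of_nat t))
      = qint L (of_nat m + of_nat (Suc l)) * qfall L (of_nat m + of_nat l) l"
    using Suc.IH by simp
  moreover have "of_nat m + of_nat (Suc l) = (of_nat m + of_nat l) + (1::complex)" by simp
  ultimately show ?case by (simp only: qfall_Suc_shift)
qed (simp add: qfall_def)

section \<open>Consequences of the transcendence of q\<close>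

lemma root_of_unity_algebraic:
  assumes "(x::complex) ^ n = 1" "n > 0" shows "algebraic x"
proof (rule algebraic_root[of 1 "monom 1 n"])
  show "algebraic (1::complex)" by simp
qed (use assms in \<open>auto simp: poly_monom degree_monom_eq\<close>)

lemma qpow_of_int_neq_1:
  assumes "\<not> algebraic (exp L)" "(n::int) \<noteq> 0"
  shows "qpow L (of_int n) \<noteq> 1"
proof
  assume n: "qpow L (of_int n) = 1"
  have "qpow L (of_nat (nat \<bar>n\<bar>)) = 1"
  proof (cases "n \<ge> 0")
    case False
    then have "of_nat (nat \<bar>n\<bar>) = - (of_int n :: complex)" by simp
    then show ?thesis using n by (simp add: qpow_minus)
  qed (use n in simp)
  then have "exp L ^ nat \<bar>n\<bar> = 1"
    using qpow_of_nat_mult[of L "nat \<bar>n\<bar>" 1] by (simp add: qpow_def)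
  with assms show False using root_of_unity_algebraic by auto
qed

lemma q_minus_q_inverse_nonzero:
  assumes "\<not> algebraic (exp L)"
  shows "qpow L 1 - qpow L (-1) \<noteq> 0"
proof
  assume "qpow L 1 - qpow L (-1) = 0"
  moreover have "qpow L 1 * qpow L (-1) = 1" by (simp add: qpow_minus)
  ultimately have "qpow L 1 * qpow L 1 = 1" by simp
  then have "qpow L (of_int 2) = 1" using qpow_add[of L 1 1] by simp
  with qpow_of_int_neq_1[OF assms, of 2] show False by simp
qed

lemma qint_of_nat_nonzero:
  assumes "\<not> algebraic (exp L)" "n > 0"
  shows "qint L (of_nat n) \<noteq> 0"
proof
  assume "qint L (of_nat n) = 0"
  then have "qpow L (2 * of_nat n) = 1"
    using qint_eq_0_iff[OF q_minus_q_inverse_nonzero[OF assms(1)]] by simp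
  then have "qpow L (of_int (2 * int n)) = 1" by simp
  moreover have "2 * int n \<noteq> 0" using assms(2) by simp
  ultimately show False using qpow_of_int_neq_1[OF assms(1)] by blast
qed

lemma qfall_of_nat_Suc_self:
  "qfall L (of_nat (Suc l)) (Suc l) = qint L (of_nat (Suc l)) * qfall L (of_nat l) l"
proof -
  have "of_nat (Suc l) = of_nat l + (1::complex)" by simp
  then show ?thesis by (simp only: qfall_Suc_shift)
qed

lemma weight_of_actK_eigenvector:
  assumes "\<not> algebraic (exp L)"
    and "actK L \<mu> T = (\<lambda>k i. qpow L (\<mu> - 2 * of_nat j) * T k i)" and "T k i \<noteq> 0"
  shows "int k = int j + i"
proof (rule ccontr)
  assume "int k \<noteq> int j + i"
  then have ne: "2 * (i + int j - int k) \<noteq> 0" by simp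
  have "qpow L (\<mu> - 2 * of_nat k + 2 * of_int i)
      = qpow L (\<mu> - 2 * of_nat j) * qpow L (of_int (2 * (i + int j - int k)))"
    by (rule qpow_split) (simp add: algebra_simps)
  moreover have "qpow L (\<mu> - 2 * of_nat k + 2 * of_int i) * T k i = qpow L (\<mu> - 2 * of_nat j) * T k i"
    using fun_cong[OF fun_cong[OF assms(2)], of k i] by (simp add: actK_def)
  ultimately have "qpow L (of_int (2 * (i + int j - int k))) = 1" using assms(3) by simp
  with qpow_of_int_neq_1[OF assms(1) ne] show False by blast
qed

section \<open>The actions of \<open>\<Delta>(e)\<close> and \<open>\<Delta>(f)\<close> on coefficient functions\<close>

definition supported :: "nat \<Rightarrow> (nat \<Rightarrow> int \<Rightarrow> complex) \<Rightarrow> bool" where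
  "supported m T \<longleftrightarrow> (\<forall>k i. (i < - int m \<or> int m < i) \<longrightarrow> T k i = 0)"

lemma supported_actF: "supported m (actF L m T)"
  by (simp add: supported_def actF_def)

lemma supported_actE: "supported m (actE L \<mu> m T)"
  by (simp add: supported_def actE_def)

text \<open>On supported functions the range guards in actF and actE are redundant: at the
  boundary the coefficient [m \<plusminus> i + 1] vanishes.\<close>

lemma actF_supported_eq:
  assumes "supported m T"
  shows "actF L m T k i = (if k \<ge> 1 then T (k - 1) i * qpow L (- 2 * of_int i) else 0)
            + T k (i + 1) * qint L (of_nat m + of_int i + 1)"
proof -
  have vanish: "T k' i' = 0" if "i' < - int m \<or> int m < i'" for k' i'
    using assms that unfolding supported_def by blast
  consider "i < - int m - 1" | "i = - int m - 1" | "- int m \<le> i" by linarith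
  then show ?thesis
  proof cases
    case 2
    then have "of_nat m + of_int i + 1 = (0::complex)" by simp
    with 2 show ?thesis using vanish by (simp add: actF_def)
  qed (use vanish in \<open>auto simp: actF_def\<close>)
qed

lemma actE_supported_eq:
  assumes "supported m T"
  shows "actE L \<mu> m T k i = T (Suc k) i * qint L (\<mu> - of_nat k) * qint L (of_nat (Suc k))
            + T k (i - 1) * qpow L (\<mu> - 2 * of_nat k) * qint L (of_nat m - of_int i + 1)"
proof -
  have vanish: "T k' i' = 0" if "i' < - int m \<or> int m < i'" for k' i'
    using assms that unfolding supported_def by blast
  consider "i > int m + 1" | "i = int m + 1" | "i \<le> int m" by linarith
  then show ?thesis
  proof cases
    case 2
    then have "of_nat m - of_int i + 1 = (0::complex)" by simp
    with 2 show ?thesis using vanish by (simp add: actE_def)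
  qed (use vanish in \<open>auto simp: actE_def\<close>)
qed

lemma actF_scale: "actF L m (\<lambda>k i. c * T k i) = (\<lambda>k i. c * actF L m T k i)"
  by (intro ext) (simp add: actF_def algebra_simps)

lemma qint_commutator_identity:
  "qpow L (-2 * of_int i) * (qint L (\<mu> - of_nat k) * qint L (of_nat (Suc k))
       - qint L (\<mu> - of_nat k + 1) * qint L (of_nat k))
   + qpow L (\<mu> - 2 * of_nat k) * (qint L (of_nat m + of_int i) * qint L (of_nat m - of_int i + 1)
       - qint L (of_nat m + of_int i + 1) * qint L (of_nat m - of_int i))
   = qint L (\<mu> - 2 * of_nat k + 2 * of_int i)"
proof -
  have "qint L (\<mu> - of_nat k) * qint L (of_nat (Suc k)) - qint L (\<mu> - of_nat k + 1) * qint L (of_nat k)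
      = qint L (\<mu> - 2 * of_nat k)"
    using qint_cross_difference[of L "\<mu> - of_nat k" "of_nat k"] by (simp add: algebra_simps)
  moreover have "qint L (of_nat m + of_int i) * qint L (of_nat m - of_int i + 1)
      - qint L (of_nat m + of_int i + 1) * qint L (of_nat m - of_int i) = qint L (2 * of_int i)"
    using qint_cross_difference[of L "of_nat m + of_int i" "of_nat m - of_int i"]
    by (simp add: algebra_simps)
  moreover have "qpow L (-2 * of_int i) * qint L (\<mu> - 2 * of_nat k)
      + qpow L (\<mu> - 2 * of_nat k) * qint L (2 * of_int i) = qint L (\<mu> - 2 * of_nat k + 2 * of_int i)"
    using qint_add[of L "2 * of_int i" "\<mu> - 2 * of_nat k"] by simp
  ultimately show ?thesis by simp
qed

text \<open>This is [e, f] = [h] on M_\<mu> \<otimes> L_2m, since f^k v \<otimes> w_2i has weight \<mu> - 2k + 2i.\<close>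

lemma actE_actF_commutator:
  assumes "supported m T"
  shows "actE L \<mu> m (actF L m T) k i
    = actF L m (actE L \<mu> m T) k i + qint L (\<mu> - 2 * of_nat k + 2 * of_int i) * T k i"
proof -
  note expand = actE_supported_eq[OF supported_actF] actF_supported_eq[OF assms]
    actF_supported_eq[OF supported_actE] actE_supported_eq[OF assms]
  have shift: "qint L (of_nat m + of_int (i - 1) + 1) = qint L (of_nat m + of_int i)"
    "qint L (of_nat m - of_int (i + 1) + 1) = qint L (of_nat m - of_int i)"
    "T k' (i + 1 - 1) = T k' i" "T k' (i - 1 + 1) = T k' i" for k'
    by simp_all
  show ?thesis
  proof (cases k)
    case 0
    show ?thesis unfolding 0 expand
      by (simp only: shift qint_commutator_identity[of L i \<mu> 0 m, symmetric])
        (simp add: algebra_simps)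
  next
    case (Suc k')
    have "qint L (\<mu> - of_nat k') = qint L (\<mu> - of_nat (Suc k') + 1)"
      "qpow L (-2 * of_int (i - 1)) = qpow L (-2 * of_int i) * qpow L 2"
      "qpow L (\<mu> - 2 * of_nat k') = qpow L (\<mu> - 2 * of_nat (Suc k')) * qpow L 2"
      by (simp, (rule qpow_split, simp add: algebra_simps)+)
    then show ?thesis unfolding Suc expand
      by (simp only: shift qint_commutator_identity[of L i \<mu> "Suc k'" m, symmetric])
        (simp add: algebra_simps)
  qed
qed

section \<open>The intertwiner\<close>

text \<open>singular_coeff L m \<mu> l is the coefficient a_l of f^l v \<otimes> w_2l in \<Phi>(v).\<close>

definition singular_coeff :: "complex \<Rightarrow> nat \<Rightarrow> complex \<Rightarrow> nat \<Rightarrow> complex" where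
  "singular_coeff L m \<mu> l = (- 1) ^ l * qpow L (- (of_nat l * (of_nat l - 1) / 2))
        * qfall L (of_nat m) l * (qpow L 1 - qpow L (- 1)) ^ l
     / (qfall L (of_nat l) l * (\<Prod>i<l. (1 - qpow L (- 2 * \<mu> + 2 * of_nat i))))"

definition singular_vector :: "complex \<Rightarrow> nat \<Rightarrow> complex \<Rightarrow> nat \<Rightarrow> int \<Rightarrow> complex" where
  "singular_vector L m \<mu> k i = (if i = int k \<and> k \<le> m then singular_coeff L m \<mu> k else 0)"

definition intertwiner :: "complex \<Rightarrow> nat \<Rightarrow> complex \<Rightarrow> nat \<Rightarrow> nat \<Rightarrow> int \<Rightarrow> complex" where
  "intertwiner L m \<mu> j = (actF L m ^^ j) (singular_vector L m \<mu>)"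

lemma singular_coeff_0: "singular_coeff L m \<mu> 0 = 1"
  by (simp add: singular_coeff_def qfall_def)

lemma singular_coeff_Suc:
  "singular_coeff L m \<mu> (Suc k) = singular_coeff L m \<mu> k *
     (- qpow L (- of_nat k) * qint L (of_nat m - of_nat k) * (qpow L 1 - qpow L (- 1))
       / (qint L (of_nat (Suc k)) * (1 - qpow L (- 2 * \<mu> + 2 * of_nat k))))"
proof -
  have triangular: "qpow L (- (of_nat (Suc k) * (of_nat (Suc k) - 1) / 2))
      = qpow L (- (of_nat k * (of_nat k - 1) / 2)) * qpow L (- of_nat k)"
    by (rule qpow_split) (simp add: field_simps)
  show ?thesis
    unfolding singular_coeff_def qfall_of_nat_Suc_self triangular
    unfolding qfall_Suc prod.lessThan_Suc power_Suc
    by (simp only: divide_inverse inverse_mult_distrib mult_ac mult_minus_left mult_minus_right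
        mult_1_left)
qed

lemma intertwiner_0: "intertwiner L m \<mu> 0 = singular_vector L m \<mu>"
  by (simp add: intertwiner_def)

lemma intertwiner_Suc: "intertwiner L m \<mu> (Suc j) = actF L m (intertwiner L m \<mu> j)"
  by (simp add: intertwiner_def)

lemma supported_singular_vector: "supported m (singular_vector L m \<mu>)"
  by (simp add: supported_def singular_vector_def)

lemma supported_intertwiner: "supported m (intertwiner L m \<mu> j)"
  by (cases j) (simp_all add: intertwiner_0 intertwiner_Suc supported_actF supported_singular_vector)

lemma intertwiner_weight: "intertwiner L m \<mu> j k i \<noteq> 0 \<Longrightarrow> int k = int j + i"
proof (induction j arbitrary: k i)
  case 0
  then show ?case by (simp add: intertwiner_0 singular_vector_def split: if_splits)
next
  case (Suc j)
  have "(if k \<ge> 1 then intertwiner L m \<mu> j (k - 1) i * qpow L (- 2 * of_int i) else 0)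
      + intertwiner L m \<mu> j k (i + 1) * qint L (of_nat m + of_int i + 1) \<noteq> 0"
    using Suc.prems unfolding intertwiner_Suc actF_supported_eq[OF supported_intertwiner] .
  then consider "intertwiner L m \<mu> j k (i + 1) \<noteq> 0"
    | "k \<ge> 1" "intertwiner L m \<mu> j (k - 1) i \<noteq> 0"
    by (cases "intertwiner L m \<mu> j k (i + 1) = 0") (auto split: if_splits)
  then show ?case
  proof cases
    case 1
    then show ?thesis using Suc.IH[of k "i + 1"] by simp
  next
    case 2
    then show ?thesis using Suc.IH[of "k - 1" i] by auto
  qed
qed

lemma intertwiner_weight_of_nat:
  "intertwiner L m \<mu> j k i \<noteq> 0 \<Longrightarrow> (of_nat k :: complex) = of_nat j + of_int i"
  by (drule intertwiner_weight) (metis of_int_add of_int_of_nat_eq)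

lemma actK_intertwiner:
  "actK L \<mu> (intertwiner L m \<mu> j) = (\<lambda>k i. qpow L (\<mu> - 2 * of_nat j) * intertwiner L m \<mu> j k i)"
proof (intro ext)
  fix k i
  show "actK L \<mu> (intertwiner L m \<mu> j) k i = qpow L (\<mu> - 2 * of_nat j) * intertwiner L m \<mu> j k i"
    by (cases "intertwiner L m \<mu> j k i = 0") (simp_all add: actK_def intertwiner_weight_of_nat)
qed

locale generic_weight =
  fixes L :: complex and m :: nat and \<mu> :: complex
  assumes transcendental: "\<not> algebraic (exp L)"
    and generic: "\<forall>k<m. exp (2 * (\<mu> - of_nat k) * L) \<noteq> 1"
begin

lemma qint_weight_nonzero: "k < m \<Longrightarrow> qint L (\<mu> - of_nat k) \<noteq> 0"
  using generic qint_eq_0_iff[OF q_minus_q_inverse_nonzero[OF transcendental]]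
  unfolding qpow_def by metis

lemma one_minus_qpow_weight_nonzero: "k < m \<Longrightarrow> 1 - qpow L (- 2 * \<mu> + 2 * of_nat k) \<noteq> 0"
proof
  assume "k < m" and "1 - qpow L (- 2 * \<mu> + 2 * of_nat k) = 0"
  moreover have "qpow L (- 2 * \<mu> + 2 * of_nat k) = inverse (qpow L (2 * (\<mu> - of_nat k)))"
    using qpow_minus[of L "2 * (\<mu> - of_nat k)"] by (simp add: algebra_simps)
  ultimately show False using generic unfolding qpow_def by (simp add: mult.assoc)
qed

text \<open>The coefficient of f^k v \<otimes> w_(2k+2) in \<Delta>(e) \<Phi>(v).\<close>

lemma singular_coeff_recursion:
  assumes "k < m"
  shows "singular_coeff L m \<mu> (Suc k) * qint L (\<mu> - of_nat k) * qint L (of_nat (Suc k))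
     + singular_coeff L m \<mu> k * qpow L (\<mu> - 2 * of_nat k) * qint L (of_nat m - of_nat k) = 0"
proof -
  define D where "D = 1 - qpow L (- 2 * \<mu> + 2 * of_nat k)"
  define c where "c = qpow L 1 - qpow L (- 1)"
  have "D \<noteq> 0" "qint L (of_nat (Suc k)) \<noteq> 0" "c \<noteq> 0"
    using one_minus_qpow_weight_nonzero[OF assms] qint_of_nat_nonzero[OF transcendental, of "Suc k"]
      q_minus_q_inverse_nonzero[OF transcendental]
    by (simp_all add: D_def c_def)
  moreover have "qpow L (- of_nat k) * (c * qint L (\<mu> - of_nat k)) = qpow L (\<mu> - 2 * of_nat k) * D"
  proof -
    have "qpow L (- 2 * \<mu> + 2 * of_nat k) = qpow L (- (\<mu> - of_nat k)) * qpow L (- (\<mu> - of_nat k))"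
      "qpow L (\<mu> - 2 * of_nat k) = qpow L (\<mu> - of_nat k) * qpow L (- of_nat k)"
      by (rule qpow_split, simp add: algebra_simps)+
    with \<open>c \<noteq> 0\<close> show ?thesis
      unfolding D_def qint_def c_def qpow_minus[of L "\<mu> - of_nat k"] by (simp add: field_simps)
  qed
  ultimately show ?thesis
    unfolding singular_coeff_Suc D_def[symmetric] c_def[symmetric] by (simp add: field_simps)
qed

lemma actE_singular_vector: "actE L \<mu> m (singular_vector L m \<mu>) k i = 0"
proof -
  have "qint L (of_nat m - of_int (int (Suc k)) + 1) = qint L (of_nat m - of_nat k)"
    by simp
  then show ?thesis
    unfolding actE_supported_eq[OF supported_singular_vector]
    using singular_coeff_recursion[of k]
    by (cases "i = int (Suc k)"; cases "Suc k \<le> m"; cases "k = m")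
      (simp_all add: singular_vector_def)
qed

lemma actE_intertwiner:
  "actE L \<mu> m (intertwiner L m \<mu> j)
    = (\<lambda>k i. qint L (\<mu> - of_nat j + 1) * qint L (of_nat j) * intertwiner L m \<mu> (j - 1) k i)"
proof (induction j)
  case 0
  then show ?case by (simp add: intertwiner_0 actE_singular_vector)
next
  case (Suc j)
  define c where "c = qint L (\<mu> - of_nat j + 1) * qint L (of_nat j)"
  have prev: "c * actF L m (intertwiner L m \<mu> (j - 1)) k i = c * intertwiner L m \<mu> j k i" for k i
    by (cases j) (simp_all add: c_def intertwiner_Suc)
  have weight: "qint L (\<mu> - 2 * of_nat k + 2 * of_int i) * intertwiner L m \<mu> j k i
      = qint L (\<mu> - 2 * of_nat j) * intertwiner L m \<mu> j k i" for k i
    by (cases "intertwiner L m \<mu> j k i = 0") (simp_all add: intertwiner_weight_of_nat)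
  have "qint L (\<mu> - of_nat j) * qint L (of_nat (Suc j)) - c = qint L (\<mu> - 2 * of_nat j)"
    using qint_cross_difference[of L "\<mu> - of_nat j" "of_nat j"] by (simp add: c_def algebra_simps)
  moreover have "qint L (\<mu> - of_nat (Suc j) + 1) = qint L (\<mu> - of_nat j)" by simp
  ultimately have step: "c * T + qint L (\<mu> - 2 * of_nat j) * T
      = qint L (\<mu> - of_nat (Suc j) + 1) * qint L (of_nat (Suc j)) * T" for T
    by (simp add: algebra_simps)
  show ?case
  proof (intro ext)
    fix k i
    have "actE L \<mu> m (intertwiner L m \<mu> (Suc j)) k i
        = actF L m (actE L \<mu> m (intertwiner L m \<mu> j)) k i
          + qint L (\<mu> - 2 * of_nat k + 2 * of_int i) * intertwiner L m \<mu> j k i"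
      unfolding intertwiner_Suc by (rule actE_actF_commutator[OF supported_intertwiner])
    also have "\<dots> = c * intertwiner L m \<mu> j k i + qint L (\<mu> - 2 * of_nat j) * intertwiner L m \<mu> j k i"
      unfolding Suc.IH c_def[symmetric] actF_scale prev weight ..
    finally show "actE L \<mu> m (intertwiner L m \<mu> (Suc j)) k i
        = qint L (\<mu> - of_nat (Suc j) + 1) * qint L (of_nat (Suc j)) * intertwiner L m \<mu> (Suc j - 1) k i"
      unfolding step by simp
  qed
qed

lemma is_trig_intertwiner_intertwiner: "is_trig_intertwiner L \<mu> m (intertwiner L m \<mu>)"
  using supported_intertwiner[of m L \<mu>]
  by (auto simp: is_trig_intertwiner_def supported_def intertwiner_Suc actE_intertwiner
      actK_intertwiner intertwiner_0 singular_vector_def singular_coeff_0)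

text \<open>Weight \<mu> forces T k i = 0 unless i = k, and killing by \<Delta>(e) then determines the
  diagonal from T 0 0 = 1.\<close>

lemma highest_weight_vector_unique:
  assumes supp: "supported m T" and killed: "\<And>k i. actE L \<mu> m T k i = 0"
    and weight: "actK L \<mu> T = (\<lambda>k i. qpow L \<mu> * T k i)" and "T 0 0 = 1"
  shows "T = singular_vector L m \<mu>"
proof -
  have weight_0: "actK L \<mu> T = (\<lambda>k i. qpow L (\<mu> - 2 * of_nat 0) * T k i)"
    using weight by simp
  have diagonal: "T k (int k) = singular_coeff L m \<mu> k" if "k \<le> m" for k
    using that
  proof (induction k)
    case 0
    then show ?case using \<open>T 0 0 = 1\<close> by (simp add: singular_coeff_0)
  next
    case (Suc k)
    then have "k < m" and previous: "T k (int (Suc k) - 1) = singular_coeff L m \<mu> k" by simp_all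
    let ?X = "qint L (\<mu> - of_nat k) * qint L (of_nat (Suc k))"
    let ?R = "singular_coeff L m \<mu> k * qpow L (\<mu> - 2 * of_nat k) * qint L (of_nat m - of_nat k)"
    have "qint L (of_nat m - of_int (int (Suc k)) + 1) = qint L (of_nat m - of_nat k)" by simp
    then have "T (Suc k) (int (Suc k)) * ?X + ?R = 0"
      using killed[of k "int (Suc k)"] unfolding actE_supported_eq[OF supp] previous
      by (simp only: mult.assoc)
    moreover have "singular_coeff L m \<mu> (Suc k) * ?X + ?R = 0"
      using singular_coeff_recursion[OF \<open>k < m\<close>] by (simp only: mult.assoc)
    ultimately have "T (Suc k) (int (Suc k)) * ?X = singular_coeff L m \<mu> (Suc k) * ?X"
      by (metis add_right_cancel)
    moreover have "?X \<noteq> 0"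
      using qint_weight_nonzero[OF \<open>k < m\<close>] qint_of_nat_nonzero[OF transcendental, of "Suc k"]
      by simp
    ultimately show ?case by simp
  qed
  show ?thesis
  proof (intro ext)
    fix k i
    show "T k i = singular_vector L m \<mu> k i"
    proof (cases "i = int k \<and> k \<le> m")
      case True
      then show ?thesis using diagonal by (simp add: singular_vector_def)
    next
      case False
      have "T k i = 0"
      proof (rule ccontr)
        assume "T k i \<noteq> 0"
        then have "int k = i"
          using weight_of_actK_eigenvector[OF transcendental weight_0] by simp
        moreover have "i \<le> int m"
          using supp \<open>T k i \<noteq> 0\<close> unfolding supported_def by force
        ultimately show False using False by simp
      qed
      then show ?thesis unfolding singular_vector_def if_not_P[OF False] .
    qed
  qed
qed

lemma is_trig_intertwiner_unique:
  assumes "is_trig_intertwiner L \<mu> m \<Psi>"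
  shows "\<Psi> = intertwiner L m \<mu>"
proof -
  have supp: "\<forall>j k i. (i < - int m \<or> int m < i) \<longrightarrow> \<Psi> j k i = 0"
    and succ: "\<forall>j. \<Psi> (Suc j) = actF L m (\<Psi> j)"
    and killed: "\<forall>j. actE L \<mu> m (\<Psi> j)
      = (\<lambda>k i. qint L (\<mu> - of_nat j + 1) * qint L (of_nat j) * \<Psi> (j - 1) k i)"
    and weight: "\<forall>j. actK L \<mu> (\<Psi> j) = (\<lambda>k i. qpow L (\<mu> - 2 * of_nat j) * \<Psi> j k i)"
    and "\<Psi> 0 0 0 = 1"
    using assms unfolding is_trig_intertwiner_def by simp_all
  have "\<Psi> 0 = singular_vector L m \<mu>"
  proof (rule highest_weight_vector_unique)
    show "supported m (\<Psi> 0)" using supp unfolding supported_def by blast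
    show "actE L \<mu> m (\<Psi> 0) k i = 0" for k i using killed by simp
    show "actK L \<mu> (\<Psi> 0) = (\<lambda>k i. qpow L \<mu> * \<Psi> 0 k i)"
      using weight by simp
  qed fact
  then have "\<Psi> j = intertwiner L m \<mu> j" for j
    using succ by (induction j) (simp_all add: intertwiner_0 intertwiner_Suc)
  then show ?thesis by (rule ext)
qed

lemma trig_intertwiner_eq: "trig_intertwiner L \<mu> m = intertwiner L m \<mu>"
  unfolding trig_intertwiner_def
  by (rule the_equality) (rule is_trig_intertwiner_intertwiner, erule is_trig_intertwiner_unique)

end

section \<open>The trace as a generating function\<close>

text \<open>diag_coeff L m \<mu> j i is the coefficient c_j(i) of f^(j+i) v \<otimes> w_2i in \<Phi>(f^j v); the
  trace is \<Sum>_j c_j(0) q^(\<lambda>(\<mu>-2j)).\<close>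

definition diag_coeff :: "complex \<Rightarrow> nat \<Rightarrow> complex \<Rightarrow> nat \<Rightarrow> nat \<Rightarrow> complex" where
  "diag_coeff L m \<mu> j i = intertwiner L m \<mu> j (j + i) (int i)"

lemma diag_coeff_0: "diag_coeff L m \<mu> 0 i = (if i \<le> m then singular_coeff L m \<mu> i else 0)"
  by (simp add: diag_coeff_def intertwiner_0 singular_vector_def)

lemma diag_coeff_Suc:
  "diag_coeff L m \<mu> (Suc j) i = diag_coeff L m \<mu> j i * qpow L (-2 * of_nat i)
     + diag_coeff L m \<mu> j (Suc i) * qint L (of_nat m + of_nat i + 1)"
proof -
  have "diag_coeff L m \<mu> (Suc j) i
      = intertwiner L m \<mu> j (j + i) (int i) * qpow L (- 2 * of_int (int i))
        + intertwiner L m \<mu> j (Suc j + i) (int i + 1) * qint L (of_nat m + of_int (int i) + 1)"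
    unfolding diag_coeff_def intertwiner_Suc actF_supported_eq[OF supported_intertwiner] by simp
  also have "intertwiner L m \<mu> j (Suc j + i) (int i + 1) = diag_coeff L m \<mu> j (Suc i)"
    unfolding diag_coeff_def by (simp add: add.commute)
  finally show ?thesis by (simp add: diag_coeff_def)
qed

lemma diag_coeff_eq_0: "m < i \<Longrightarrow> diag_coeff L m \<mu> j i = 0"
  using supported_intertwiner[of m L \<mu> j] unfolding supported_def diag_coeff_def by simp

definition diag_ratio :: "complex \<Rightarrow> nat \<Rightarrow> real" where
  "diag_ratio L m = 1 + (\<Sum>i\<le>m. cmod (qpow L (-2 * of_nat i)) + cmod (qint L (of_nat m + of_nat i + 1)))"

definition diag_scale :: "complex \<Rightarrow> nat \<Rightarrow> complex \<Rightarrow> real" where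
  "diag_scale L m \<mu> = (\<Sum>i\<le>m. cmod (singular_coeff L m \<mu> i))"

lemma diag_ratio_ge_1: "diag_ratio L m \<ge> 1"
  unfolding diag_ratio_def by (simp add: sum_nonneg)

lemma diag_ratio_ge:
  "i \<le> m \<Longrightarrow> cmod (qpow L (-2 * of_nat i)) + cmod (qint L (of_nat m + of_nat i + 1)) \<le> diag_ratio L m"
  unfolding diag_ratio_def
  by (rule add_increasing[OF zero_le_one member_le_sum]) auto

lemma norm_diag_coeff_le: "cmod (diag_coeff L m \<mu> j i) \<le> diag_scale L m \<mu> * diag_ratio L m ^ j"
proof (induction j arbitrary: i)
  case 0
  show ?case
    unfolding diag_coeff_0 diag_scale_def
    by (auto intro: member_le_sum simp: sum_nonneg)
next
  case (Suc j)
  let ?B = "diag_scale L m \<mu> * diag_ratio L m ^ j"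
  show ?case
  proof (cases "i \<le> m")
    case True
    have "?B \<ge> 0" using norm_ge_zero order_trans Suc.IH by blast
    have "cmod (diag_coeff L m \<mu> (Suc j) i)
        \<le> cmod (diag_coeff L m \<mu> j i) * cmod (qpow L (-2 * of_nat i))
          + cmod (diag_coeff L m \<mu> j (Suc i)) * cmod (qint L (of_nat m + of_nat i + 1))"
      unfolding diag_coeff_Suc by (metis norm_triangle_ineq norm_mult)
    also have "\<dots> \<le> ?B * (cmod (qpow L (-2 * of_nat i)) + cmod (qint L (of_nat m + of_nat i + 1)))"
      unfolding distrib_left by (intro add_mono mult_right_mono Suc.IH) simp_all
    also have "\<dots> \<le> ?B * diag_ratio L m"
      by (rule mult_left_mono[OF diag_ratio_ge[OF True] \<open>?B \<ge> 0\<close>])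
    finally show ?thesis by (simp add: ac_simps)
  next
    case False
    then show ?thesis
      using diag_ratio_ge_1[of L m] by (simp add: diag_coeff_eq_0 diag_scale_def sum_nonneg)
  qed
qed

lemma summable_diag_series:
  assumes "cmod x < 1 / diag_ratio L m"
  shows "summable (\<lambda>j. diag_coeff L m \<mu> j i * x ^ j)"
proof (rule summable_comparison_test)
  have "diag_ratio L m * cmod x < 1" "diag_ratio L m * cmod x \<ge> 0"
    using assms diag_ratio_ge_1[of L m] by (simp_all add: field_simps)
  then show "summable (\<lambda>j. diag_scale L m \<mu> * (diag_ratio L m * cmod x) ^ j)"
    by (intro summable_mult summable_geometric) simp
  have "cmod (diag_coeff L m \<mu> j i) * cmod x ^ j \<le> diag_scale L m \<mu> * diag_ratio L m ^ j * cmod x ^ j"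
    for j by (rule mult_right_mono[OF norm_diag_coeff_le]) simp
  then show "\<exists>N. \<forall>j\<ge>N. norm (diag_coeff L m \<mu> j i * x ^ j) \<le> diag_scale L m \<mu> * (diag_ratio L m * cmod x) ^ j"
    by (simp add: norm_mult norm_power power_mult_distrib mult.assoc)
qed

text \<open>The sum of G_i(x), in the closed form obtained by solving its recursion downwards from
  G_(m+1) = 0.\<close>

definition diag_genfun :: "complex \<Rightarrow> nat \<Rightarrow> complex \<Rightarrow> complex \<Rightarrow> nat \<Rightarrow> complex" where
  "diag_genfun L m \<mu> x i = (\<Sum>l\<in>{i..m}. singular_coeff L m \<mu> l
      * (\<Prod>t\<in>{i<..l}. qint L (of_nat m + of_nat t)) * x ^ (l - i)
      / (\<Prod>t\<in>{i..l}. (1 - x * qpow L (-2 * of_nat t))))"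

lemma diag_genfun_recursion:
  assumes "i \<le> m" and nonsingular: "1 - x * qpow L (-2 * of_nat i) \<noteq> 0"
  shows "diag_genfun L m \<mu> x i * (1 - x * qpow L (-2 * of_nat i))
    = singular_coeff L m \<mu> i + x * qint L (of_nat m + of_nat i + 1) * diag_genfun L m \<mu> x (Suc i)"
proof -
  define D where "D = 1 - x * qpow L (-2 * of_nat i)"
  define Q where "Q = qint L (of_nat m + of_nat i + 1)"
  define F where "F l = singular_coeff L m \<mu> l * (\<Prod>t\<in>{Suc i<..l}. qint L (of_nat m + of_nat t))
      * x ^ (l - Suc i) / (\<Prod>t\<in>{Suc i..l}. (1 - x * qpow L (-2 * of_nat t)))" for l
  have summand: "singular_coeff L m \<mu> l * (\<Prod>t\<in>{i<..l}. qint L (of_nat m + of_nat t)) * x ^ (l - i)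
      / (\<Prod>t\<in>{i..l}. (1 - x * qpow L (-2 * of_nat t))) = x * Q / D * F l"
    if "l \<in> {Suc i..m}" for l
  proof -
    have "{i<..l} = insert (Suc i) {Suc i<..l}" "{i..l} = insert i {Suc i..l}" using that by auto
    moreover have "l - i = Suc (l - Suc i)" using that by auto
    ultimately show ?thesis
      unfolding D_def Q_def F_def by (simp add: ac_simps divide_inverse)
  qed
  have split: "{i..m} = insert i {Suc i..m}" and "i \<notin> {Suc i..m}" using assms by auto
  have "diag_genfun L m \<mu> x i = singular_coeff L m \<mu> i / D + (\<Sum>l\<in>{Suc i..m}. x * Q / D * F l)"
    unfolding diag_genfun_def split sum.insert[OF finite_atLeastAtMost \<open>i \<notin> {Suc i..m}\<close>]
  proof (intro arg_cong2[where f="(+)"])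
    show "(\<Sum>l\<in>{Suc i..m}. singular_coeff L m \<mu> l * (\<Prod>t\<in>{i<..l}. qint L (of_nat m + of_nat t))
        * x ^ (l - i) / (\<Prod>t\<in>{i..l}. (1 - x * qpow L (-2 * of_nat t))))
      = (\<Sum>l\<in>{Suc i..m}. x * Q / D * F l)"
      by (rule sum.cong[OF refl summand])
  qed (simp add: D_def)
  also have "(\<Sum>l\<in>{Suc i..m}. x * Q / D * F l) = x * Q / D * diag_genfun L m \<mu> x (Suc i)"
    unfolding diag_genfun_def F_def sum_distrib_left ..
  finally show ?thesis using nonsingular unfolding D_def[symmetric] Q_def[symmetric]
    by (simp add: field_simps)
qed

lemma diag_series_sums:
  assumes x: "cmod x < 1 / diag_ratio L m" and "i \<le> Suc m"
  shows "(\<lambda>j. diag_coeff L m \<mu> j i * x ^ j) sums diag_genfun L m \<mu> x i"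
  using \<open>i \<le> Suc m\<close>
proof (induction i rule: inc_induct)
  case base
  then show ?case by (simp add: diag_coeff_eq_0 diag_genfun_def)
next
  case (step i)
  then have "i \<le> m" by simp
  define q where "q = qpow L (-2 * of_nat i)"
  define Q where "Q = qint L (of_nat m + of_nat i + 1)"
  define f where "f j = diag_coeff L m \<mu> j i * x ^ j" for j
  have "cmod x * cmod q \<le> cmod x * diag_ratio L m"
    using diag_ratio_ge[OF \<open>i \<le> m\<close>, of L] unfolding q_def
    by (intro mult_left_mono) (auto intro: order_trans[rotated])
  also have "\<dots> < 1"
    using x diag_ratio_ge_1[of L m] by (simp add: field_simps)
  finally have "cmod (x * q) < 1" by (simp add: norm_mult)
  then have "1 - x * q \<noteq> 0" by auto
  have "f sums suminf f"
    unfolding f_def using summable_diag_series[OF x] by (rule summable_sums)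
  moreover have "f (Suc j) = x * q * f j + x * Q * (diag_coeff L m \<mu> j (Suc i) * x ^ j)" for j
    unfolding f_def diag_coeff_Suc q_def Q_def by (simp add: algebra_simps)
  ultimately have "(\<lambda>j. f (Suc j)) sums (x * q * suminf f + x * Q * diag_genfun L m \<mu> x (Suc i))"
    by (simp only:) (intro sums_add sums_mult step.IH)
  then have "f sums (x * q * suminf f + x * Q * diag_genfun L m \<mu> x (Suc i) + f 0)"
    by (simp only: sums_Suc_iff)
  then have "suminf f = x * q * suminf f + x * Q * diag_genfun L m \<mu> x (Suc i) + f 0"
    by (rule sums_unique2[OF \<open>f sums suminf f\<close>])
  moreover have "f 0 = singular_coeff L m \<mu> i" using \<open>i \<le> m\<close> by (simp add: f_def diag_coeff_0)
  ultimately have "suminf f = x * q * suminf f + x * Q * diag_genfun L m \<mu> x (Suc i) + singular_coeff L m \<mu> i"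
    by simp
  then have "suminf f * (1 - x * q) = singular_coeff L m \<mu> i + x * Q * diag_genfun L m \<mu> x (Suc i)"
    by (simp add: algebra_simps)
  also have "\<dots> = diag_genfun L m \<mu> x i * (1 - x * q)"
    using diag_genfun_recursion[OF \<open>i \<le> m\<close>] \<open>1 - x * q \<noteq> 0\<close> unfolding q_def Q_def by simp
  finally have "suminf f = diag_genfun L m \<mu> x i" using \<open>1 - x * q \<noteq> 0\<close> by simp
  with \<open>f sums suminf f\<close> show ?case unfolding f_def by simp
qed

lemma trace_formula_eq_diag_genfun:
  "trace_formula L \<mu> m lam = qpow L (lam * \<mu>) * diag_genfun L m \<mu> (qpow L (-2 * lam)) 0"
proof -
  have "qpow L (- 2 * lam * of_nat l) = qpow L (-2 * lam) ^ l" for l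
    by (subst qpow_of_nat_mult[symmetric]) (simp add: ac_simps)
  moreover have "(\<Prod>t\<in>{0..l}. (1 - qpow L (-2 * lam) * qpow L (-2 * of_nat t)))
      = (\<Prod>i\<le>l. (1 - qpow L (- 2 * lam - 2 * of_nat i)))" for l
    unfolding atLeast0AtMost by (intro prod.cong refl) (simp add: qpow_add[symmetric])
  ultimately show ?thesis
    unfolding trace_formula_def diag_genfun_def singular_coeff_def prod_qint_eq_qfall
      atLeast0AtMost diff_zero
    by (simp only: divide_inverse inverse_mult_distrib mult_ac)
qed

lemma (in generic_weight) trace_term_sums:
  assumes "cmod (qpow L (- 2 * lam)) < 1 / diag_ratio L m"
  shows "trace_term L \<mu> m lam sums trace_formula L \<mu> m lam"
proof -
  have "trace_term L \<mu> m lam = (\<lambda>j. qpow L (lam * \<mu>) * (diag_coeff L m \<mu> j 0 * qpow L (-2 * lam) ^ j))"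
  proof
    fix j
    have "qpow L (lam * (\<mu> - 2 * of_nat j)) = qpow L (lam * \<mu>) * qpow L (of_nat j * (-2 * lam))"
      by (rule qpow_split) (simp add: algebra_simps)
    then show "trace_term L \<mu> m lam j = qpow L (lam * \<mu>) * (diag_coeff L m \<mu> j 0 * qpow L (-2 * lam) ^ j)"
      unfolding trace_term_def trig_intertwiner_eq diag_coeff_def qpow_of_nat_mult by simp
  qed
  then show ?thesis
    unfolding trace_formula_eq_diag_genfun using diag_series_sums[OF assms] by (simp add: sums_mult)
qed

lemma countable_nongeneric_weights:
  fixes L :: complex and m :: nat
  assumes "L \<noteq> 0"
  shows "countable {\<mu>. \<exists>k<m. exp (2 * (\<mu> - of_nat k) * L) = 1}"
proof (rule countable_subset)
  let ?root = "\<lambda>(k, n). of_nat k + of_int n * complex_of_real pi * \<i> / L"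
  show "{\<mu>. \<exists>k<m. exp (2 * (\<mu> - of_nat k) * L) = 1} \<subseteq> ?root ` (UNIV :: (nat \<times> int) set)"
  proof
    fix \<mu> assume "\<mu> \<in> {\<mu>. \<exists>k<m. exp (2 * (\<mu> - of_nat k) * L) = 1}"
    then obtain k where "exp (2 * (\<mu> - of_nat k) * L) = exp 0" by auto
    then obtain n :: int where "2 * ((\<mu> - of_nat k) * L) = 2 * (of_int n * complex_of_real pi * \<i>)"
      unfolding exp_eq by (auto simp: algebra_simps)
    then have "(\<mu> - of_nat k) * L = of_int n * complex_of_real pi * \<i>" by simp
    then have "\<mu> = of_nat k + of_int n * complex_of_real pi * \<i> / L"
      using assms by (simp add: field_simps)
    then show "\<mu> \<in> ?root ` UNIV" by (intro image_eqI[of _ _ "(k, n)"]) auto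
  qed
qed simp

theorem proposition7p2:
  fixes L :: complex and m :: nat
  assumes "\<not> algebraic (exp L)"
  shows "\<exists>S :: complex set. countable S \<and>
    (\<forall>\<mu>. \<mu> \<notin> S \<longrightarrow>
      (\<exists>\<epsilon>>0. \<forall>lam. cmod (qpow L (- 2 * lam)) < \<epsilon> \<longrightarrow>
         trace_term L \<mu> m lam sums trace_formula L \<mu> m lam))"
proof (intro exI[of _ "{\<mu>. \<exists>k<m. exp (2 * (\<mu> - of_nat k) * L) = 1}"] conjI allI impI)
  have "L \<noteq> 0" using assms by auto
  then show "countable {\<mu>. \<exists>k<m. exp (2 * (\<mu> - of_nat k) * L) = 1}"
    by (rule countable_nongeneric_weights)
next
  fix \<mu> assume "\<mu> \<notin> {\<mu>. \<exists>k<m. exp (2 * (\<mu> - of_nat k) * L) = 1}"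
  then interpret generic_weight L m \<mu>
    using assms by unfold_locales auto
  show "\<exists>\<epsilon>>0. \<forall>lam. cmod (qpow L (- 2 * lam)) < \<epsilon> \<longrightarrow>
      trace_term L \<mu> m lam sums trace_formula L \<mu> m lam"
    using diag_ratio_ge_1[of L m] trace_term_sums by (intro exI[of _ "1 / diag_ratio L m"]) auto
qed

end
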